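(* Let $d\ge 2$. There is a constant $C_d$ depending only on $d$ such that for all $r>0$ and $\delta>0$, $$\Bigl|\int_0^{\pi}\Delta_\delta(r\cos\theta)\cos\theta\,(\sin\theta)^{d-2}\,d\theta\Bigr|\le C_d\,\frac{\delta^{(d+1)/2}}{r^{(d-1)/2}}.$$
   Context: For $\delta>0$, $Q_\delta(t):=\delta\lfloor t/\delta+1/2\rfloor$ and $\Delta_\delta(t):=t-Q_\delta(t)$. *)

theory Defs
  imports "HOL-Analysis.Analysis"
begin

definition Qd :: "real \<Rightarrow> real \<Rightarrow> real" where
  "Qd \<delta> t = \<delta> * of_int \<lfloor>t / \<delta> + 1/2\<rfloor>"

definition Dd :: "real \<Rightarrow> real \<Rightarrow> real" where
  "Dd \<delta> t = t - Qd \<delta> t"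

end

theory Submission
  imports Defs
begin

text \<open>
  Write \<open>\<Delta> = Dd \<delta>\<close>, a sawtooth of period \<open>\<delta>\<close> with mean zero and \<open>\<bar>\<Delta>\<bar> \<le> \<delta>/2\<close>, and
  \<open>\<epsilon> = sqrt (\<delta>/r)\<close>.  For a kernel \<open>K\<close> put
    \<open>N n K = \<integral> sin \<theta> ^ n * K (r cos \<theta>)\<close>  and  \<open>M n K = \<integral> cos \<theta> * sin \<theta> ^ n * K (r cos \<theta>)\<close>
  (integrals over \<open>[0, \<pi>]\<close>); the theorem says \<open>M (d - 2) \<Delta> = O(\<delta> \<epsilon> ^ (d - 1))\<close>.

  Repeatedly taking the mean-zero primitive of \<open>\<Delta>\<close> gives a tower of periodic kernels
  \<open>K 0 = \<Delta>\<close>, \<open>(K (k+1))' = K k\<close>, with \<open>\<bar>K k\<bar> \<le> 2^k \<delta>^(k+1) / 2\<close>.  If \<open>L' = K\<close> then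
  \<open>d/d\<theta> L (r cos \<theta>) = - r sin \<theta> K (r cos \<theta>)\<close>, and integration by parts gives
    \<open>N (m+2) K = (m+1) M m L / r\<close>,   \<open>M (m+2) K = ((m+1) N m L - (m+2) N (m+2) L) / r\<close>.
  Each step gains a factor \<open>\<delta>/r = \<epsilon>^2\<close> at the price of one primitive (a factor \<open>\<delta>\<close>).
  The first moments are \<open>O(sup \<bar>L\<bar> / r)\<close> by one integration by parts; the zeroth moments are
  \<open>O(\<epsilon> sup \<bar>K\<bar> + sup \<bar>L\<bar> / (r \<epsilon>))\<close>, by cutting off \<open>[0, \<epsilon>]\<close> and \<open>[\<pi> - \<epsilon>, \<pi>]\<close> and
  integrating by parts against \<open>1 / sin \<theta>\<close> on the rest.  Induction on \<open>n\<close>, for all \<open>k\<close> at once,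
  yields \<open>N n (K k), M n (K k) = O(\<delta>^(k+1) \<epsilon>^(n+1))\<close> for \<open>\<delta> \<le> r\<close>; the case \<open>\<delta> > r\<close>
  follows from \<open>\<bar>\<Delta>\<bar> \<le> \<delta>/2\<close> alone.
\<close>

section \<open>The sawtooth \<open>Dd \<delta>\<close>\<close>

lemma Dd_periodic:
  assumes "\<delta> > 0"
  shows "Dd \<delta> (s + \<delta>) = Dd \<delta> s"
proof -
  have "(s + \<delta>) / \<delta> + 1/2 = (s / \<delta> + 1/2) + 1"
    using assms by (simp add: field_simps)
  then have "\<lfloor>(s + \<delta>) / \<delta> + 1/2\<rfloor> = \<lfloor>s / \<delta> + 1/2\<rfloor> + 1"
    by (metis floor_add_int of_int_1)
  then show ?thesis
    unfolding Dd_def Qd_def by (simp add: algebra_simps)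
qed

lemma Dd_bound:
  assumes "\<delta> > 0"
  shows "\<bar>Dd \<delta> s\<bar> \<le> \<delta> / 2"
proof -
  let ?x = "s / \<delta>"
  have "\<bar>?x - of_int \<lfloor>?x + 1/2\<rfloor>\<bar> \<le> 1/2"
    using of_int_floor_le[of "?x + 1/2"] real_of_int_floor_add_one_gt[of "?x + 1/2"] by linarith
  then have "\<bar>\<delta> * (?x - of_int \<lfloor>?x + 1/2\<rfloor>)\<bar> \<le> \<delta> * (1/2)"
    using assms by (simp add: abs_mult)
  moreover have "Dd \<delta> s = \<delta> * (?x - of_int \<lfloor>?x + 1/2\<rfloor>)"
    using assms unfolding Dd_def Qd_def by (simp add: algebra_simps)
  ultimately show ?thesis by simp
qed

lemma Dd_central:
  assumes "\<delta> > 0" "-\<delta>/2 \<le> s" "s < \<delta>/2"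
  shows "Dd \<delta> s = s"
proof -
  have "0 \<le> s / \<delta> + 1/2" "s / \<delta> + 1/2 < 1"
    using assms by (auto simp: field_simps)
  then have "\<lfloor>s / \<delta> + 1/2\<rfloor> = 0" by (simp add: floor_eq_iff)
  then show ?thesis unfolding Dd_def Qd_def by simp
qed

lemma Dd_isCont:
  assumes "\<delta> > 0" "s / \<delta> + 1/2 \<notin> \<int>"
  shows "isCont (Dd \<delta>) s"
proof -
  have "((\<lambda>x. \<lfloor>x / \<delta> + 1/2\<rfloor>) has_real_derivative 0) (at s)"
    by (rule floor_has_real_derivative) (use assms in \<open>auto intro!: continuous_intros\<close>)
  then have "isCont (\<lambda>x. real_of_int \<lfloor>x / \<delta> + 1/2\<rfloor>) s" by (rule DERIV_isCont)
  then show ?thesis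
    unfolding Dd_def[abs_def] Qd_def by (auto intro!: continuous_intros)
qed

lemma Dd_measurable: "Dd \<delta> \<in> borel_measurable borel"
  unfolding Dd_def[abs_def] Qd_def by measurable

lemma Dd_integrable:
  assumes "\<delta> > 0"
  shows "Dd \<delta> integrable_on {a..b}"
proof -
  have "Dd \<delta> absolutely_integrable_on {a..b}"
  proof (rule measurable_bounded_by_integrable_imp_absolutely_integrable)
    show "Dd \<delta> \<in> borel_measurable (lebesgue_on {a..b})"
      using Dd_measurable by (simp add: measurable_completion measurable_restrict_space1)
    show "(\<lambda>x. \<delta> / 2) integrable_on {a..b}"
      by (intro integrable_continuous_real continuous_intros)
    show "norm (Dd \<delta> x) \<le> \<delta> / 2" if "x \<in> {a..b}" for x
      using Dd_bound[OF assms] by simp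
  qed simp
  then show ?thesis by (rule set_lebesgue_integral_eq_integral(1))
qed

lemma Dd_weighted_integrable:
  assumes "\<delta> > 0" "continuous_on {0..pi} w"
  shows "(\<lambda>\<theta>. w \<theta> * Dd \<delta> (r * cos \<theta>)) integrable_on {0..pi}"
proof -
  have "(\<lambda>\<theta>. Dd \<delta> (r * cos \<theta>) * w \<theta>) absolutely_integrable_on {0..pi}"
  proof (rule absolutely_integrable_bounded_measurable_product_real)
    have "(\<lambda>\<theta>. Dd \<delta> (r * cos \<theta>)) \<in> borel_measurable borel"
      by (rule measurable_compose[OF _ Dd_measurable]) measurable
    then show "(\<lambda>\<theta>. Dd \<delta> (r * cos \<theta>)) \<in> borel_measurable (lebesgue_on {0..pi})"
      by (simp add: measurable_completion measurable_restrict_space1)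
    show "bounded ((\<lambda>\<theta>. Dd \<delta> (r * cos \<theta>)) ` {0..pi})"
      using Dd_bound[OF assms(1)] by (auto simp: bounded_iff intro!: exI[of _ "\<delta> / 2"])
    show "w absolutely_integrable_on {0..pi}"
      by (rule absolutely_integrable_continuous_real[OF assms(2)])
  qed simp
  then show ?thesis
    by (simp add: mult.commute set_lebesgue_integral_eq_integral(1))
qed

lemma periodic_reduce:
  fixes g :: "real \<Rightarrow> 'b"
  assumes d: "\<delta> > 0" and per: "\<forall>s\<ge>a. g (s + \<delta>) = g s" and s: "s \<ge> a"
  obtains x where "a \<le> x" "x \<le> a + \<delta>" "g s = g x"
proof -
  define n where "n = nat \<lfloor>(s - a) / \<delta>\<rfloor>"
  define x where "x = s - real n * \<delta>"
  have "0 \<le> (s - a) / \<delta>" using s d by simp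
  then have "real n \<le> (s - a) / \<delta>" "(s - a) / \<delta> < real n + 1"
    unfolding n_def by linarith+
  then have x: "a \<le> x" "x \<le> a + \<delta>"
    using d unfolding x_def by (simp_all add: field_simps)
  have "g (x + real j * \<delta>) = g x" for j
  proof (induction j)
    case (Suc j)
    have "a \<le> x + real j * \<delta>" using x d by (intro add_increasing2) auto
    then have "g (x + real j * \<delta> + \<delta>) = g (x + real j * \<delta>)" using per by blast
    then show ?case using Suc by (simp add: algebra_simps)
  qed simp
  then have "g s = g x" unfolding x_def by (metis diff_add_cancel)
  with x show ?thesis by (rule that)
qed

lemma periodic_integral_const:
  fixes f :: "real \<Rightarrow> real"
  assumes d: "\<delta> > 0" and fi: "\<And>b. f integrable_on {a..b}"
    and per: "\<forall>s\<ge>a. f (s + \<delta>) = f s" and s: "s \<ge> a"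
  shows "integral {s..s+\<delta>} f = integral {a..a+\<delta>} f"
proof -
  have int: "f integrable_on {x..y}" if "a \<le> x" for x y
    using integrable_subinterval_real[OF fi[of y], of x y] that
    by (cases "x \<le> y") (auto simp: integrable_on_empty)
  have shift: "integral {x..y} f = integral {x+\<delta>..y+\<delta>} f" if "a \<le> x" for x y
  proof -
    have "integral {x..y} (f \<circ> (+) \<delta>) = integral {x..y} f"
      by (rule integral_cong) (use per that in \<open>auto simp: add.commute\<close>)
    then show ?thesis using integral_shift_Icc_real[of x y f \<delta>] by simp
  qed
  define H where "H t = integral {t..t+\<delta>} f" for t
  have "\<forall>t\<ge>a. H (t + \<delta>) = H t"
    using shift unfolding H_def by simp
  moreover have base: "H t = H a" if "a \<le> t" "t \<le> a + \<delta>" for t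
  proof -
    have "integral {a..t} f + integral {t..a+\<delta>} f = H a"
      unfolding H_def by (rule Henstock_Kurzweil_Integration.integral_combine) (use that int in auto)
    moreover have "integral {t..a+\<delta>} f + integral {a+\<delta>..t+\<delta>} f = H t"
      unfolding H_def by (rule Henstock_Kurzweil_Integration.integral_combine) (use that d int in auto)
    ultimately show ?thesis using shift[of a t] by simp
  qed
  ultimately obtain x where "a \<le> x" "x \<le> a + \<delta>" "H s = H x"
    using periodic_reduce[OF d _ s] by metis
  then show ?thesis using base unfolding H_def by metis
qed

lemma integral_abs_bound:
  fixes f :: "real \<Rightarrow> real"
  assumes "f integrable_on {a..b}" "a \<le> b" "\<And>x. x \<in> {a..b} \<Longrightarrow> \<bar>f x\<bar> \<le> B"
  shows "\<bar>integral {a..b} f\<bar> \<le> B * (b - a)"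
proof -
  have "0 \<le> B" using assms(2) assms(3)[of a] by force
  moreover have "\<And>x. x \<in> {a..b} - {} \<Longrightarrow> norm (f x) \<le> B" using assms(3) by simp
  ultimately show ?thesis
    using has_integral_bound_real[OF _ finite.emptyI integrable_integral[OF assms(1)]] assms(2)
    by simp
qed

section \<open>Mean-zero primitives and the kernel tower\<close>

definition zero_mean_periodic :: "real \<Rightarrow> real \<Rightarrow> real \<Rightarrow> (real \<Rightarrow> real) \<Rightarrow> bool" where
  "zero_mean_periodic a \<delta> B f \<longleftrightarrow>
     (\<forall>b. f integrable_on {a..b}) \<and> (\<forall>s\<ge>a. f (s + \<delta>) = f s) \<and>
     (\<forall>s\<ge>a. \<bar>f s\<bar> \<le> B) \<and> (\<forall>s\<ge>a. integral {s..s+\<delta>} f = 0)"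

lemma Dd_zero_mean_periodic:
  assumes d: "\<delta> > 0" and a: "a \<le> -\<delta>/2"
  shows "zero_mean_periodic a \<delta> (\<delta>/2) (Dd \<delta>)"
proof -
  have per: "\<forall>s\<ge>a. Dd \<delta> (s + \<delta>) = Dd \<delta> s" using Dd_periodic[OF d] by simp
  have "integral {s..s+\<delta>} (Dd \<delta>) = 0" if s: "s \<ge> a" for s
  proof -
    have "integral {s..s+\<delta>} (Dd \<delta>) = integral {-\<delta>/2..\<delta>/2} (Dd \<delta>)"
      using periodic_integral_const[OF d Dd_integrable[OF d] per s]
        periodic_integral_const[OF d Dd_integrable[OF d] per a] by simp
    also have "\<dots> = integral {-\<delta>/2..\<delta>/2} (\<lambda>x. x)"
      by (rule integral_spike[where S="{\<delta>/2}"]) (use Dd_central[OF d] in auto)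
    also have "\<dots> = 0" using d by (simp add: integral_ident power2_eq_square)
    finally show ?thesis .
  qed
  then show ?thesis
    unfolding zero_mean_periodic_def using Dd_integrable[OF d] per Dd_bound[OF d] by simp
qed

text \<open>The primitive of \<open>f\<close> from \<open>a\<close>, normalised to have mean zero over \<open>[a, a+\<delta>]\<close>.\<close>
definition prim :: "real \<Rightarrow> real \<Rightarrow> (real \<Rightarrow> real) \<Rightarrow> real \<Rightarrow> real" where
  "prim a \<delta> f s = integral {a..s} f - integral {a..a+\<delta>} (\<lambda>x. integral {a..x} f) / \<delta>"

lemma prim_continuous:
  assumes "\<And>b. f integrable_on {a..b}"
  shows "continuous_on {a..b} (prim a \<delta> f)"
  unfolding prim_def by (intro continuous_intros indefinite_integral_continuous_1 assms)

lemma prim_deriv: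
  assumes fi: "\<And>b. f integrable_on {a..b}" and s: "s > a" and cont: "isCont f s"
  shows "(prim a \<delta> f has_real_derivative f s) (at s)"
proof -
  have "((\<lambda>u. integral {a..u} f) has_vector_derivative f s) (at s within ({a..s+1} - {}))"
    by (rule integral_has_vector_derivative_continuous_at[OF fi])
       (use s cont in \<open>auto intro: continuous_at_imp_continuous_within\<close>)
  then have "((\<lambda>u. integral {a..u} f) has_real_derivative f s) (at s)"
    using at_within_Icc_at[of a s "s+1"] s by (simp add: has_real_derivative_iff_has_vector_derivative)
  then show ?thesis
    unfolding prim_def[abs_def] by (rule DERIV_cong[OF DERIV_diff[OF _ DERIV_const]]) simp
qed

lemma indefinite_integral_periodic:
  assumes d: "\<delta> > 0" and f: "zero_mean_periodic a \<delta> B f"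
  shows "\<forall>s\<ge>a. integral {a..s+\<delta>} f = integral {a..s} f"
    and "\<forall>s\<ge>a. \<bar>integral {a..s} f\<bar> \<le> \<delta> * B"
proof -
  have fi: "\<And>b. f integrable_on {a..b}" and bd: "\<forall>s\<ge>a. \<bar>f s\<bar> \<le> B"
    and mz: "\<forall>s\<ge>a. integral {s..s+\<delta>} f = 0"
    using f unfolding zero_mean_periodic_def by auto
  show per: "\<forall>s\<ge>a. integral {a..s+\<delta>} f = integral {a..s} f"
  proof (intro allI impI)
    fix s assume "a \<le> s"
    then have "integral {a..s} f + integral {s..s+\<delta>} f = integral {a..s+\<delta>} f"
      using d fi by (intro Henstock_Kurzweil_Integration.integral_combine) auto
    then show "integral {a..s+\<delta>} f = integral {a..s} f" using mz \<open>a \<le> s\<close> by simp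
  qed
  have "0 \<le> B" using bd by force
  have period: "\<bar>integral {a..t} f\<bar> \<le> \<delta> * B" if "a \<le> t" "t \<le> a + \<delta>" for t
  proof -
    have "\<bar>integral {a..t} f\<bar> \<le> B * (t - a)"
      by (rule integral_abs_bound[OF fi]) (use bd that in auto)
    also have "\<dots> \<le> B * \<delta>" using that \<open>0 \<le> B\<close> by (intro mult_left_mono) auto
    finally show ?thesis by (simp add: mult.commute)
  qed
  show "\<forall>s\<ge>a. \<bar>integral {a..s} f\<bar> \<le> \<delta> * B"
  proof (intro allI impI)
    fix s assume "a \<le> s"
    then obtain t where "a \<le> t" "t \<le> a + \<delta>" "integral {a..s} f = integral {a..t} f"
      using periodic_reduce[OF d per] by metis
    then show "\<bar>integral {a..s} f\<bar> \<le> \<delta> * B" using period by simp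
  qed
qed

lemma prim_zero_mean_periodic:
  assumes d: "\<delta> > 0" and f: "zero_mean_periodic a \<delta> B f"
  shows "zero_mean_periodic a \<delta> (2 * \<delta> * B) (prim a \<delta> f)"
proof -
  have fi: "\<And>b. f integrable_on {a..b}" using f unfolding zero_mean_periodic_def by auto
  define G where "G s = integral {a..s} f" for s
  define c where "c = integral {a..a+\<delta>} G / \<delta>"
  have P: "prim a \<delta> f = (\<lambda>s. G s - c)" unfolding prim_def G_def c_def by auto
  have Gc: "continuous_on {a..b} G" for b
    unfolding G_def by (rule indefinite_integral_continuous_1[OF fi])
  have Gper: "\<forall>s\<ge>a. G (s + \<delta>) = G s" and Gb: "\<forall>s\<ge>a. \<bar>G s\<bar> \<le> \<delta> * B"
    using indefinite_integral_periodic[OF d f] unfolding G_def by auto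
  have "\<bar>integral {a..a+\<delta>} G\<bar> \<le> (\<delta> * B) * (a + \<delta> - a)"
    by (rule integral_abs_bound[OF integrable_continuous_real[OF Gc]]) (use Gb d in auto)
  then have cb: "\<bar>c\<bar> \<le> \<delta> * B"
    unfolding c_def using d by (simp add: divide_le_eq abs_divide mult_ac)
  have Pi: "prim a \<delta> f integrable_on {a..b}" for b
    by (rule integrable_continuous_real[OF prim_continuous[OF fi]])
  have Pper: "\<forall>s\<ge>a. prim a \<delta> f (s + \<delta>) = prim a \<delta> f s" using Gper P by simp
  have "integral {s..s+\<delta>} (prim a \<delta> f) = 0" if "a \<le> s" for s
  proof -
    have "integral {s..s+\<delta>} (prim a \<delta> f) = integral {a..a+\<delta>} (\<lambda>s. G s - c)"
      using periodic_integral_const[OF d Pi Pper that] P by simp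
    also have "\<dots> = integral {a..a+\<delta>} G - integral {a..a+\<delta>} (\<lambda>s. c)"
      by (rule integral_diff) (auto intro!: integrable_continuous_real Gc)
    also have "\<dots> = 0" unfolding c_def using d by simp
    finally show ?thesis .
  qed
  moreover have "\<bar>G s - c\<bar> \<le> 2 * \<delta> * B" if "a \<le> s" for s
    using Gb that cb by force
  ultimately show ?thesis
    unfolding zero_mean_periodic_def using Pi Pper P by simp
qed

fun kern :: "real \<Rightarrow> real \<Rightarrow> nat \<Rightarrow> real \<Rightarrow> real" where
  "kern a \<delta> 0 = Dd \<delta>"
| "kern a \<delta> (Suc k) = prim a \<delta> (kern a \<delta> k)"

lemma kern_zero_mean_periodic:
  assumes "\<delta> > 0" "a \<le> -\<delta>/2"
  shows "zero_mean_periodic a \<delta> (2^k * \<delta>^(k+1) / 2) (kern a \<delta> k)"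
proof (induction k)
  case 0
  then show ?case using Dd_zero_mean_periodic[OF assms] by simp
next
  case (Suc k)
  then show ?case using prim_zero_mean_periodic[OF assms(1) Suc] by (simp add: mult_ac)
qed

lemma kern_integrable:
  assumes "\<delta> > 0" "a \<le> -\<delta>/2"
  shows "kern a \<delta> k integrable_on {a..b}"
  using kern_zero_mean_periodic[OF assms] unfolding zero_mean_periodic_def by blast

lemma kern_continuous:
  assumes "\<delta> > 0" "a \<le> -\<delta>/2"
  shows "continuous_on {a..b} (kern a \<delta> (Suc k))"
  using prim_continuous[OF kern_integrable[OF assms]] by simp

lemma kern_deriv:
  assumes d: "\<delta> > 0" and a: "a \<le> -\<delta>/2" and s: "s > a"
    and nj: "k > 0 \<or> s / \<delta> + 1/2 \<notin> \<int>"
  shows "(kern a \<delta> (Suc k) has_real_derivative kern a \<delta> k s) (at s)"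
proof -
  have "isCont (kern a \<delta> k) s"
  proof (cases k)
    case 0
    then show ?thesis using nj Dd_isCont[OF d] by simp
  next
    case (Suc j)
    show ?thesis
      using continuous_on_interior[OF kern_continuous[OF d a, of "s+1" j]] s Suc by simp
  qed
  then show ?thesis using prim_deriv[OF kern_integrable[OF d a] s] by simp
qed

section \<open>Integration by parts along \<open>\<theta> \<mapsto> r cos \<theta>\<close>\<close>

definition primitive_on :: "real \<Rightarrow> (real \<Rightarrow> real) \<Rightarrow> (real \<Rightarrow> real) \<Rightarrow> bool" where
  "primitive_on r L K \<longleftrightarrow> continuous_on {-r..r} L \<and>
     (\<exists>T. finite T \<and> (\<forall>s\<in>{-r..r} - T. (L has_real_derivative K s) (at s)))"

lemma cos_scaled_range:
  fixes r :: real
  assumes "r > 0"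
  shows "r * cos \<theta> \<in> {-r..r}"
proof -
  have "\<bar>r * cos \<theta>\<bar> \<le> r"
    using mult_left_mono[OF abs_cos_le_one[of \<theta>], of r] assms by (simp add: abs_mult)
  then show ?thesis by (auto simp: abs_le_iff)
qed

lemma primitive_on_continuous_comp:
  assumes "r > 0" "primitive_on r L K"
  shows "continuous_on S (\<lambda>\<theta>. L (r * cos \<theta>))"
proof -
  have L: "continuous_on {-r..r} L" using assms(2) unfolding primitive_on_def by blast
  have sub: "(\<lambda>\<theta>. r * cos \<theta>) ` S \<subseteq> {-r..r}" using cos_scaled_range[OF assms(1)] by blast
  show ?thesis by (rule continuous_on_compose2[OF L _ sub]) (intro continuous_intros)
qed

text \<open>The key identity behind every estimate: \<open>g sin \<theta> K(r cos \<theta>) = -(g L(r cos \<theta>))'/r + g' L(r cos \<theta>)/r\<close>.\<close>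
lemma ibp_along_cos:
  fixes K L g g' :: "real \<Rightarrow> real"
  assumes r: "r > 0" and ab: "0 \<le> \<alpha>" "\<alpha> \<le> \<beta>" "\<beta> \<le> pi" and LK: "primitive_on r L K"
    and gd: "\<And>\<theta>. \<theta> \<in> {\<alpha>..\<beta>} \<Longrightarrow> (g has_real_derivative g' \<theta>) (at \<theta>)"
    and gc: "continuous_on {\<alpha>..\<beta>} g'"
  shows "((\<lambda>\<theta>. g \<theta> * sin \<theta> * K (r * cos \<theta>)) has_integral
          (g \<alpha> * L (r * cos \<alpha>) - g \<beta> * L (r * cos \<beta>)
           + integral {\<alpha>..\<beta>} (\<lambda>\<theta>. g' \<theta> * L (r * cos \<theta>))) / r) {\<alpha>..\<beta>}"
proof -
  obtain T where T: "finite T" and LK': "\<And>s. s \<in> {-r..r} - T \<Longrightarrow> (L has_real_derivative K s) (at s)"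
    using LK unfolding primitive_on_def by blast
  have cL: "continuous_on {\<alpha>..\<beta>} (\<lambda>\<theta>. L (r * cos \<theta>))"
    by (rule primitive_on_continuous_comp[OF r LK])
  have cg: "continuous_on {\<alpha>..\<beta>} g"
    by (rule DERIV_continuous_on) (use gd in \<open>auto intro: has_field_derivative_at_within\<close>)
  \<comment> \<open>Only finitely many \<open>\<theta>\<close> are mapped into \<open>T\<close>, as \<open>cos\<close> is injective on \<open>[0, \<pi>]\<close>.\<close>
  define S where "S = (\<lambda>\<theta>. r * cos \<theta>) -` T \<inter> {\<alpha>..\<beta>}"
  have "inj_on (\<lambda>\<theta>. r * cos \<theta>) {\<alpha>..\<beta>}"
    by (rule inj_onI) (use r ab cos_inj_pi in auto)
  then have S: "finite S" unfolding S_def by (rule finite_vimage_IntI[OF T])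
  define \<phi>' where "\<phi>' \<theta> = g' \<theta> * L (r * cos \<theta>) - r * (g \<theta> * sin \<theta> * K (r * cos \<theta>))" for \<theta>
  have "((\<lambda>\<theta>. g \<theta> * L (r * cos \<theta>)) has_vector_derivative \<phi>' \<theta>) (at \<theta>)"
    if "\<theta> \<in> {\<alpha><..<\<beta>} - S" for \<theta>
  proof -
    have "r * cos \<theta> \<in> {-r..r} - T" using that cos_scaled_range[OF r] unfolding S_def by auto
    then have "((\<lambda>\<theta>. L (r * cos \<theta>)) has_real_derivative K (r * cos \<theta>) * - (r * sin \<theta>)) (at \<theta>)"
      by (intro DERIV_chain2[OF LK']) (auto intro!: derivative_eq_intros)
    moreover have "(g has_real_derivative g' \<theta>) (at \<theta>)" using that by (intro gd) auto
    ultimately have "((\<lambda>\<theta>. g \<theta> * L (r * cos \<theta>)) has_real_derivative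
        g \<theta> * (K (r * cos \<theta>) * - (r * sin \<theta>)) + g' \<theta> * L (r * cos \<theta>)) (at \<theta>)"
      by (intro DERIV_mult')
    then have "((\<lambda>\<theta>. g \<theta> * L (r * cos \<theta>)) has_real_derivative \<phi>' \<theta>) (at \<theta>)"
      by (rule DERIV_cong) (simp add: \<phi>'_def algebra_simps)
    then show ?thesis by (simp add: has_real_derivative_iff_has_vector_derivative)
  qed
  then have "(\<phi>' has_integral (g \<beta> * L (r * cos \<beta>) - g \<alpha> * L (r * cos \<alpha>))) {\<alpha>..\<beta>}"
    by (intro fundamental_theorem_of_calculus_interior_strong[OF S ab(2)])
       (auto intro!: continuous_intros cg cL)
  moreover have "((\<lambda>\<theta>. g' \<theta> * L (r * cos \<theta>)) has_integral
      integral {\<alpha>..\<beta>} (\<lambda>\<theta>. g' \<theta> * L (r * cos \<theta>))) {\<alpha>..\<beta>}"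
    by (intro integrable_integral integrable_continuous_real continuous_intros gc cL)
  ultimately have "((\<lambda>\<theta>. (-1/r) * (\<phi>' \<theta> - g' \<theta> * L (r * cos \<theta>))) has_integral
      (-1/r) * ((g \<beta> * L (r * cos \<beta>) - g \<alpha> * L (r * cos \<alpha>))
                - integral {\<alpha>..\<beta>} (\<lambda>\<theta>. g' \<theta> * L (r * cos \<theta>)))) {\<alpha>..\<beta>}"
    by (intro has_integral_mult_right has_integral_diff)
  moreover have "(\<lambda>\<theta>. (-1/r) * (\<phi>' \<theta> - g' \<theta> * L (r * cos \<theta>)))
      = (\<lambda>\<theta>. g \<theta> * sin \<theta> * K (r * cos \<theta>))"
    using r by (auto simp: \<phi>'_def field_simps)
  moreover have "(-1/r) * ((g \<beta> * L (r * cos \<beta>) - g \<alpha> * L (r * cos \<alpha>))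
        - integral {\<alpha>..\<beta>} (\<lambda>\<theta>. g' \<theta> * L (r * cos \<theta>)))
      = (g \<alpha> * L (r * cos \<alpha>) - g \<beta> * L (r * cos \<beta>)
         + integral {\<alpha>..\<beta>} (\<lambda>\<theta>. g' \<theta> * L (r * cos \<theta>))) / r"
    using r by (simp add: field_simps)
  ultimately show ?thesis by simp
qed

lemma ibp_along_cos_vanishing:
  fixes K L g g' :: "real \<Rightarrow> real"
  assumes r: "r > 0" and LK: "primitive_on r L K"
    and gd: "\<And>\<theta>. (g has_real_derivative g' \<theta>) (at \<theta>)" and gc: "continuous_on {0..pi} g'"
    and "g 0 = 0" "g pi = 0"
  shows "integral {0..pi} (\<lambda>\<theta>. g \<theta> * sin \<theta> * K (r * cos \<theta>))
       = integral {0..pi} (\<lambda>\<theta>. g' \<theta> * L (r * cos \<theta>)) / r"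
proof -
  have "((\<lambda>\<theta>. g \<theta> * sin \<theta> * K (r * cos \<theta>)) has_integral
      (g 0 * L (r * cos 0) - g pi * L (r * cos pi)
       + integral {0..pi} (\<lambda>\<theta>. g' \<theta> * L (r * cos \<theta>))) / r) {0..pi}"
    by (rule ibp_along_cos[OF r order_refl pi_ge_zero order_refl LK gd gc])
  then show ?thesis using assms(5,6) by (simp add: integral_unique)
qed

section \<open>The moments and their recurrences\<close>

definition sin_moment :: "real \<Rightarrow> (real \<Rightarrow> real) \<Rightarrow> nat \<Rightarrow> real" where
  "sin_moment r K n = integral {0..pi} (\<lambda>\<theta>. sin \<theta> ^ n * K (r * cos \<theta>))"

definition cos_sin_moment :: "real \<Rightarrow> (real \<Rightarrow> real) \<Rightarrow> nat \<Rightarrow> real" where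
  "cos_sin_moment r K n = integral {0..pi} (\<lambda>\<theta>. cos \<theta> * sin \<theta> ^ n * K (r * cos \<theta>))"

text \<open>The derivatives of the two weights \<open>sin^(m+1)\<close> and \<open>cos sin^(m+1)\<close> that vanish at \<open>0\<close> and \<open>\<pi>\<close>.\<close>
lemma sin_power_deriv:
  "((\<lambda>\<theta>. sin \<theta> ^ Suc m) has_real_derivative real (Suc m) * (cos \<theta> * sin \<theta> ^ m)) (at \<theta>)"
  by (rule DERIV_cong[OF DERIV_power_Suc[OF DERIV_sin]]) (simp add: algebra_simps)

lemma cos_sin_power_deriv:
  "((\<lambda>\<theta>. cos \<theta> * sin \<theta> ^ Suc m) has_real_derivative
      real (Suc m) * sin \<theta> ^ m - real (Suc (Suc m)) * sin \<theta> ^ Suc (Suc m)) (at \<theta>)"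
proof -
  have cc: "cos \<theta> * cos \<theta> = 1 - sin \<theta> * sin \<theta>"
    using sin_cos_squared_add3[of \<theta>] by linarith
  have "- sin \<theta> * sin \<theta> ^ Suc m + cos \<theta> * (real (Suc m) * (cos \<theta> * sin \<theta> ^ m))
      = - sin \<theta> * sin \<theta> ^ Suc m + real (Suc m) * sin \<theta> ^ m * (cos \<theta> * cos \<theta>)"
    by (simp add: algebra_simps)
  also have "\<dots> = real (Suc m) * sin \<theta> ^ m - real (Suc (Suc m)) * sin \<theta> ^ Suc (Suc m)"
    unfolding cc by (simp add: algebra_simps)
  finally show ?thesis
    by (intro DERIV_cong[OF DERIV_mult[OF DERIV_cos sin_power_deriv]]) (simp add: mult_ac)
qed

lemma sin_moment_recurrence:
  assumes r: "r > 0" and LK: "primitive_on r L K"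
  shows "sin_moment r K (Suc (Suc m)) = real (Suc m) * cos_sin_moment r L m / r"
proof -
  have "sin_moment r K (Suc (Suc m)) = integral {0..pi} (\<lambda>\<theta>. sin \<theta> ^ Suc m * sin \<theta> * K (r * cos \<theta>))"
    unfolding sin_moment_def by (simp add: mult_ac)
  also have "\<dots> = integral {0..pi} (\<lambda>\<theta>. real (Suc m) * (cos \<theta> * sin \<theta> ^ m) * L (r * cos \<theta>)) / r"
    by (rule ibp_along_cos_vanishing[OF r LK sin_power_deriv]) (auto intro!: continuous_intros)
  also have "\<dots> = real (Suc m) * cos_sin_moment r L m / r"
    unfolding cos_sin_moment_def by (simp add: mult.assoc)
  finally show ?thesis .
qed

lemma cos_sin_moment_recurrence:
  assumes r: "r > 0" and LK: "primitive_on r L K"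
  shows "cos_sin_moment r K (Suc (Suc m)) =
     (real (Suc m) * sin_moment r L m - real (Suc (Suc m)) * sin_moment r L (Suc (Suc m))) / r"
proof -
  have cL: "continuous_on {0..pi} (\<lambda>\<theta>. L (r * cos \<theta>))"
    by (rule primitive_on_continuous_comp[OF r LK])
  have "cos_sin_moment r K (Suc (Suc m))
      = integral {0..pi} (\<lambda>\<theta>. cos \<theta> * sin \<theta> ^ Suc m * sin \<theta> * K (r * cos \<theta>))"
    unfolding cos_sin_moment_def by (simp add: mult_ac)
  also have "\<dots> = integral {0..pi} (\<lambda>\<theta>. (real (Suc m) * sin \<theta> ^ m
      - real (Suc (Suc m)) * sin \<theta> ^ Suc (Suc m)) * L (r * cos \<theta>)) / r"
    by (rule ibp_along_cos_vanishing[OF r LK cos_sin_power_deriv]) (auto intro!: continuous_intros)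
  also have "integral {0..pi} (\<lambda>\<theta>. (real (Suc m) * sin \<theta> ^ m
      - real (Suc (Suc m)) * sin \<theta> ^ Suc (Suc m)) * L (r * cos \<theta>))
    = real (Suc m) * sin_moment r L m - real (Suc (Suc m)) * sin_moment r L (Suc (Suc m))"
    unfolding sin_moment_def left_diff_distrib mult.assoc
    by (subst integral_diff) (auto intro!: integrable_continuous_real continuous_intros cL)
  finally show ?thesis .
qed

section \<open>Estimates for the two lowest moments\<close>

lemma sin_lower_bound:
  fixes x :: real
  assumes "0 \<le> x" "x \<le> 1"
  shows "x / 2 \<le> sin x"
proof -
  have "\<bar>sin x - (\<Sum>m<3. sin_coeff m * x ^ m)\<bar> \<le> inverse (fact 3) * \<bar>x\<bar> ^ 3"
    by (rule Maclaurin_sin_bound)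
  moreover have "(\<Sum>m<3. sin_coeff m * x ^ m) = x"
    by (simp add: eval_nat_numeral sin_coeff_def)
  moreover have "x ^ 3 \<le> x"
    using mult_left_mono[OF mult_le_one[OF assms(2) assms(1) assms(2)] assms(1)]
    by (simp add: eval_nat_numeral)
  ultimately have "\<bar>sin x - x\<bar> * 6 \<le> x" using assms by (simp add: eval_nat_numeral)
  then show ?thesis using assms by (simp add: abs_if split: if_splits)
qed

lemma cut_off_ends:
  fixes f :: "real \<Rightarrow> real"
  assumes fi: "f integrable_on {0..pi}" and e: "0 \<le> \<epsilon>" "\<epsilon> \<le> pi/2" and fb: "\<And>\<theta>. \<bar>f \<theta>\<bar> \<le> B"
  shows "\<bar>integral {0..pi} f\<bar> \<le> \<bar>integral {\<epsilon>..pi-\<epsilon>} f\<bar> + 2 * \<epsilon> * B"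
proof -
  have sub: "f integrable_on {x..y}" if "0 \<le> x" "y \<le> pi" for x y
    using integrable_subinterval_real[OF fi, of x y] that
    by (cases "x \<le> y") (auto simp: integrable_on_empty)
  have "integral {0..\<epsilon>} f + integral {\<epsilon>..pi} f = integral {0..pi} f"
    by (rule Henstock_Kurzweil_Integration.integral_combine) (use e fi in auto)
  moreover have "integral {\<epsilon>..pi-\<epsilon>} f + integral {pi-\<epsilon>..pi} f = integral {\<epsilon>..pi} f"
    by (rule Henstock_Kurzweil_Integration.integral_combine) (use e sub in auto)
  moreover have "\<bar>integral {0..\<epsilon>} f\<bar> \<le> B * \<epsilon>"
    using integral_abs_bound[OF sub[of 0 \<epsilon>], of B] fb e by simp
  moreover have "\<bar>integral {pi-\<epsilon>..pi} f\<bar> \<le> B * \<epsilon>"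
    using integral_abs_bound[OF sub[of "pi-\<epsilon>" pi], of B] fb e by simp
  moreover have "2 * \<epsilon> * B = B * \<epsilon> + B * \<epsilon>" by simp
  ultimately show ?thesis by linarith
qed

text \<open>\<open>\<integral> 1 / sin\<^sup>2 = [-cot]\<close> over \<open>[\<epsilon>, \<pi> - \<epsilon>]\<close>.\<close>
lemma integral_inv_sin_sq:
  assumes "0 < \<epsilon>" "\<epsilon> < pi/2"
  shows "((\<lambda>\<theta>. 1 / (sin \<theta>)\<^sup>2) has_integral 2 * cos \<epsilon> / sin \<epsilon>) {\<epsilon>..pi-\<epsilon>}"
proof -
  have "((\<lambda>\<theta>. 1 / (sin \<theta>)\<^sup>2) has_integral (- cot (pi - \<epsilon>)) - (- cot \<epsilon>)) {\<epsilon>..pi-\<epsilon>}"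
  proof (rule fundamental_theorem_of_calculus)
    show "\<epsilon> \<le> pi - \<epsilon>" using assms by simp
    fix \<theta> assume "\<theta> \<in> {\<epsilon>..pi-\<epsilon>}"
    then have "sin \<theta> > 0" using assms by (intro sin_gt_zero) auto
    then have "((\<lambda>\<theta>. - cot \<theta>) has_real_derivative 1 / (sin \<theta>)\<^sup>2) (at \<theta>)"
      by (intro DERIV_cong[OF DERIV_minus[OF DERIV_cot]]) (auto simp: divide_inverse)
    then show "((\<lambda>\<theta>. - cot \<theta>) has_vector_derivative 1 / (sin \<theta>)\<^sup>2) (at \<theta> within {\<epsilon>..pi-\<epsilon>})"
      by (simp add: has_real_derivative_iff_has_vector_derivative has_vector_derivative_at_within)
  qed
  then show ?thesis by (simp add: cot_def)
qed

lemma inv_sin_sq_weighted_bound: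
  assumes e: "0 < \<epsilon>" "\<epsilon> < pi/2" and fi: "(\<lambda>\<theta>. h \<theta> * F \<theta>) integrable_on {\<epsilon>..pi-\<epsilon>}"
    and hb: "\<And>\<theta>. \<theta> \<in> {\<epsilon>..pi-\<epsilon>} \<Longrightarrow> \<bar>h \<theta>\<bar> \<le> 2 / (sin \<theta>)\<^sup>2"
    and Fb: "\<And>\<theta>. \<bar>F \<theta>\<bar> \<le> B'"
  shows "\<bar>integral {\<epsilon>..pi-\<epsilon>} (\<lambda>\<theta>. h \<theta> * F \<theta>)\<bar> \<le> 4 * B' / sin \<epsilon>"
proof -
  have B'0: "0 \<le> B'" using Fb[of 0] by linarith
  have hint: "((\<lambda>\<theta>. 2 * B' * (1 / (sin \<theta>)\<^sup>2)) has_integral 2 * B' * (2 * cos \<epsilon> / sin \<epsilon>)) {\<epsilon>..pi-\<epsilon>}"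
    by (intro has_integral_mult_right integral_inv_sin_sq e)
  have "norm (integral {\<epsilon>..pi-\<epsilon>} (\<lambda>\<theta>. h \<theta> * F \<theta>)) \<le> integral {\<epsilon>..pi-\<epsilon>} (\<lambda>\<theta>. 2 * B' * (1 / (sin \<theta>)\<^sup>2))"
  proof (rule integral_norm_bound_integral[OF fi])
    show "(\<lambda>\<theta>. 2 * B' * (1 / (sin \<theta>)\<^sup>2)) integrable_on {\<epsilon>..pi-\<epsilon>}" using hint by blast
    fix \<theta> assume "\<theta> \<in> {\<epsilon>..pi-\<epsilon>}"
    then have "\<bar>h \<theta>\<bar> * \<bar>F \<theta>\<bar> \<le> 2 / (sin \<theta>)\<^sup>2 * B'"
      using hb Fb B'0 by (intro mult_mono) auto
    then show "norm (h \<theta> * F \<theta>) \<le> 2 * B' * (1 / (sin \<theta>)\<^sup>2)" by (simp add: abs_mult)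
  qed
  also have "\<dots> = 4 * B' * cos \<epsilon> / sin \<epsilon>" using integral_unique[OF hint] by simp
  also have "\<dots> \<le> 4 * B' / sin \<epsilon>"
    using e B'0 sin_gt_zero[of \<epsilon>] by (intro divide_right_mono) (auto intro: mult_left_le)
  finally show ?thesis by simp
qed

text \<open>Away from the ends, write \<open>w = (w / sin) sin\<close> and integrate by parts once.\<close>
lemma middle_part_bound:
  fixes K L w w' :: "real \<Rightarrow> real"
  assumes r: "r > 0" and e: "0 < \<epsilon>" "\<epsilon> < pi/2" and LK: "primitive_on r L K"
    and LB: "\<And>s. s \<in> {-r..r} \<Longrightarrow> \<bar>L s\<bar> \<le> B'"
    and wd: "\<And>\<theta>. (w has_real_derivative w' \<theta>) (at \<theta>)" and w'c: "continuous_on UNIV w'"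
    and wb: "\<And>\<theta>. \<bar>w \<theta>\<bar> \<le> 1" and w'b: "\<And>\<theta>. \<bar>w' \<theta>\<bar> \<le> 1"
  shows "\<bar>integral {\<epsilon>..pi-\<epsilon>} (\<lambda>\<theta>. w \<theta> * K (r * cos \<theta>))\<bar> \<le> 6 * B' / (r * sin \<epsilon>)"
proof -
  have LB': "\<bar>L (r * cos \<theta>)\<bar> \<le> B'" for \<theta> by (rule LB[OF cos_scaled_range[OF r]])
  have sinpos: "sin \<theta> > 0" if "\<theta> \<in> {\<epsilon>..pi-\<epsilon>}" for \<theta> using that e by (intro sin_gt_zero) auto
  have se: "sin \<epsilon> > 0" using sinpos e by auto
  define g where "g \<theta> = w \<theta> / sin \<theta>" for \<theta>
  define g' where "g' \<theta> = (w' \<theta> * sin \<theta> - w \<theta> * cos \<theta>) / (sin \<theta>)\<^sup>2" for \<theta>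
  have wc: "continuous_on UNIV w"
    by (rule DERIV_continuous_on) (use wd in \<open>auto intro: has_field_derivative_at_within\<close>)
  have gd: "(g has_real_derivative g' \<theta>) (at \<theta>)" if "\<theta> \<in> {\<epsilon>..pi-\<epsilon>}" for \<theta>
    unfolding g_def[abs_def] g'_def using sinpos[OF that]
    by (intro DERIV_cong[OF DERIV_divide[OF wd DERIV_sin]]) (auto simp: power2_eq_square)
  have g'c: "continuous_on {\<epsilon>..pi-\<epsilon>} g'"
    unfolding g'_def[abs_def]
    by (intro continuous_intros continuous_on_subset[OF wc] continuous_on_subset[OF w'c])
       (use sinpos in \<open>fastforce+\<close>)
  define q where "q = B' / sin \<epsilon>"
  have ends: "\<bar>g \<theta> * L (r * cos \<theta>)\<bar> \<le> q" if "sin \<theta> = sin \<epsilon>" for \<theta>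
  proof -
    have "\<bar>w \<theta>\<bar> * \<bar>L (r * cos \<theta>)\<bar> \<le> 1 * B'" by (rule mult_mono[OF wb LB']) auto
    then show ?thesis
      unfolding q_def g_def abs_mult abs_divide using that se by (simp add: divide_right_mono)
  qed
  define I where "I = integral {\<epsilon>..pi-\<epsilon>} (\<lambda>\<theta>. g' \<theta> * L (r * cos \<theta>))"
  have "\<bar>I\<bar> \<le> 4 * B' / sin \<epsilon>"
    unfolding I_def
  proof (rule inv_sin_sq_weighted_bound[OF e _ _ LB'])
    show "(\<lambda>\<theta>. g' \<theta> * L (r * cos \<theta>)) integrable_on {\<epsilon>..pi-\<epsilon>}"
      by (intro integrable_continuous_real continuous_intros g'c primitive_on_continuous_comp[OF r LK])
    fix \<theta> assume "\<theta> \<in> {\<epsilon>..pi-\<epsilon>}"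
    have "\<bar>w' \<theta> * sin \<theta>\<bar> \<le> 1" "\<bar>w \<theta> * cos \<theta>\<bar> \<le> 1"
      using w'b[of \<theta>] wb[of \<theta>] abs_sin_le_one[of \<theta>] abs_cos_le_one[of \<theta>]
      by (simp_all add: abs_mult mult_le_one)
    then have "\<bar>w' \<theta> * sin \<theta> - w \<theta> * cos \<theta>\<bar> \<le> 2" by linarith
    then show "\<bar>g' \<theta>\<bar> \<le> 2 / (sin \<theta>)\<^sup>2"
      unfolding g'_def abs_divide abs_power2 by (intro divide_right_mono) auto
  qed
  then have Iq: "\<bar>I\<bar> \<le> 4 * q" unfolding q_def by simp
  have "integral {\<epsilon>..pi-\<epsilon>} (\<lambda>\<theta>. w \<theta> * K (r * cos \<theta>))
      = integral {\<epsilon>..pi-\<epsilon>} (\<lambda>\<theta>. g \<theta> * sin \<theta> * K (r * cos \<theta>))"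
  proof (rule integral_cong)
    fix \<theta> assume "\<theta> \<in> {\<epsilon>..pi-\<epsilon>}"
    then have "sin \<theta> \<noteq> 0" using sinpos by fastforce
    then show "w \<theta> * K (r * cos \<theta>) = g \<theta> * sin \<theta> * K (r * cos \<theta>)" by (simp add: g_def)
  qed
  also have "\<dots> = (g \<epsilon> * L (r * cos \<epsilon>) - g (pi-\<epsilon>) * L (r * cos (pi-\<epsilon>)) + I) / r"
    unfolding I_def by (rule integral_unique[OF ibp_along_cos[OF r _ _ _ LK gd g'c]]) (use e in auto)
  finally have eq: "integral {\<epsilon>..pi-\<epsilon>} (\<lambda>\<theta>. w \<theta> * K (r * cos \<theta>))
      = (g \<epsilon> * L (r * cos \<epsilon>) - g (pi-\<epsilon>) * L (r * cos (pi-\<epsilon>)) + I) / r" .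
  have "\<bar>g \<epsilon> * L (r * cos \<epsilon>) - g (pi-\<epsilon>) * L (r * cos (pi-\<epsilon>)) + I\<bar> \<le> 6 * q"
    using ends[of \<epsilon>] ends[of "pi-\<epsilon>"] Iq by simp
  then have "\<bar>integral {\<epsilon>..pi-\<epsilon>} (\<lambda>\<theta>. w \<theta> * K (r * cos \<theta>))\<bar> \<le> 6 * q / r"
    unfolding eq abs_divide using r by (simp add: divide_right_mono)
  then show ?thesis unfolding q_def by (simp add: mult.commute)
qed

lemma weighted_integral_bound:
  fixes K L w w' :: "real \<Rightarrow> real"
  assumes r: "r > 0" and e: "0 < \<epsilon>" "\<epsilon> \<le> 1" and LK: "primitive_on r L K"
    and KB: "\<And>s. s \<in> {-r..r} \<Longrightarrow> \<bar>K s\<bar> \<le> B" and LB: "\<And>s. s \<in> {-r..r} \<Longrightarrow> \<bar>L s\<bar> \<le> B'"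
    and wd: "\<And>\<theta>. (w has_real_derivative w' \<theta>) (at \<theta>)" and w'c: "continuous_on UNIV w'"
    and wb: "\<And>\<theta>. \<bar>w \<theta>\<bar> \<le> 1" and w'b: "\<And>\<theta>. \<bar>w' \<theta>\<bar> \<le> 1"
    and wi: "(\<lambda>\<theta>. w \<theta> * K (r * cos \<theta>)) integrable_on {0..pi}"
  shows "\<bar>integral {0..pi} (\<lambda>\<theta>. w \<theta> * K (r * cos \<theta>))\<bar> \<le> 2 * \<epsilon> * B + 12 * B' / (r * \<epsilon>)"
proof -
  have e2: "\<epsilon> < pi/2" using e pi_gt3 by linarith
  have "\<bar>w \<theta> * K (r * cos \<theta>)\<bar> \<le> 1 * B" for \<theta>
    unfolding abs_mult by (rule mult_mono) (use wb KB[OF cos_scaled_range[OF r]] in auto)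
  then have "\<bar>integral {0..pi} (\<lambda>\<theta>. w \<theta> * K (r * cos \<theta>))\<bar>
      \<le> \<bar>integral {\<epsilon>..pi-\<epsilon>} (\<lambda>\<theta>. w \<theta> * K (r * cos \<theta>))\<bar> + 2 * \<epsilon> * B"
    using cut_off_ends[OF wi] e e2 by simp
  also have "\<bar>integral {\<epsilon>..pi-\<epsilon>} (\<lambda>\<theta>. w \<theta> * K (r * cos \<theta>))\<bar> \<le> 6 * B' / (r * sin \<epsilon>)"
    by (rule middle_part_bound[OF r e(1) e2 LK LB wd w'c wb w'b])
  also have "6 * B' / (r * sin \<epsilon>) \<le> 12 * B' / (r * \<epsilon>)"
  proof -
    have "0 \<le> B'" using LB[of r] r by auto
    moreover have "\<epsilon> / 2 \<le> sin \<epsilon>" using sin_lower_bound e by simp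
    ultimately show ?thesis
      using r e by (simp add: field_simps mult_left_mono mult_right_mono)
  qed
  finally show ?thesis by linarith
qed

lemma first_moments_bound:
  fixes K L :: "real \<Rightarrow> real"
  assumes r: "r > 0" and LK: "primitive_on r L K" and LB: "\<And>s. s \<in> {-r..r} \<Longrightarrow> \<bar>L s\<bar> \<le> B'"
  shows "\<bar>sin_moment r K 1\<bar> \<le> 6 * B' / r" and "\<bar>cos_sin_moment r K 1\<bar> \<le> 6 * B' / r"
proof -
  have Lr: "\<bar>L r\<bar> \<le> B'" "\<bar>L (-r)\<bar> \<le> B'" using LB r by auto
  then have B'0: "0 \<le> B'" by linarith
  have "((\<lambda>\<theta>. 1 * sin \<theta> * K (r * cos \<theta>)) has_integral
      (1 * L (r * cos 0) - 1 * L (r * cos pi) + integral {0..pi} (\<lambda>\<theta>. 0 * L (r * cos \<theta>))) / r) {0..pi}"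
    by (rule ibp_along_cos[OF r _ _ _ LK]) auto
  then have "sin_moment r K 1 = (L r - L (-r)) / r"
    unfolding sin_moment_def by (simp add: integral_unique)
  then show "\<bar>sin_moment r K 1\<bar> \<le> 6 * B' / r"
    using Lr B'0 r by (simp add: abs_divide divide_right_mono)
  have "((\<lambda>\<theta>. cos \<theta> * sin \<theta> * K (r * cos \<theta>)) has_integral
      (cos 0 * L (r * cos 0) - cos pi * L (r * cos pi)
       + integral {0..pi} (\<lambda>\<theta>. - sin \<theta> * L (r * cos \<theta>))) / r) {0..pi}"
    by (rule ibp_along_cos[OF r _ _ _ LK]) (auto intro!: DERIV_cos continuous_intros)
  then have "cos_sin_moment r K 1
      = (L r + L (-r) + integral {0..pi} (\<lambda>\<theta>. - sin \<theta> * L (r * cos \<theta>))) / r"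
    unfolding cos_sin_moment_def by (simp add: integral_unique)
  moreover have "\<bar>integral {0..pi} (\<lambda>\<theta>. - sin \<theta> * L (r * cos \<theta>))\<bar> \<le> B' * (pi - 0)"
  proof (rule integral_abs_bound)
    show "(\<lambda>\<theta>. - sin \<theta> * L (r * cos \<theta>)) integrable_on {0..pi}"
      by (intro integrable_continuous_real continuous_intros primitive_on_continuous_comp[OF r LK])
    fix \<theta>
    show "\<bar>- sin \<theta> * L (r * cos \<theta>)\<bar> \<le> B'"
      using mult_mono[OF abs_sin_le_one[of \<theta>] LB[OF cos_scaled_range[OF r]]] B'0 by (simp add: abs_mult)
  qed simp
  moreover have "B' * (pi - 0) \<le> B' * 4" using pi_less_4 B'0 by (intro mult_left_mono) auto
  ultimately show "\<bar>cos_sin_moment r K 1\<bar> \<le> 6 * B' / r"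
    using Lr r by (simp add: abs_divide divide_right_mono)
qed

text \<open>Based at \<open>-r - \<delta>\<close>, the tower is defined on all of \<open>[-r, r]\<close>.\<close>
abbreviation kernel :: "real \<Rightarrow> real \<Rightarrow> nat \<Rightarrow> real \<Rightarrow> real" where
  "kernel \<delta> r k \<equiv> kern (-r-\<delta>) \<delta> k"

lemma half_integer_points_finite:
  fixes \<delta> r :: real
  assumes d: "\<delta> > 0"
  shows "finite {s \<in> {-r..r}. s / \<delta> + 1/2 \<in> \<int>}"
proof (rule finite_subset)
  show "{s \<in> {-r..r}. s / \<delta> + 1/2 \<in> \<int>} \<subseteq> (\<lambda>m. (of_int m - 1/2) * \<delta>) ` {\<lfloor>-r/\<delta>\<rfloor>..\<lceil>r/\<delta>\<rceil>+1}"
  proof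
    fix s assume s: "s \<in> {s \<in> {-r..r}. s / \<delta> + 1/2 \<in> \<int>}"
    then obtain m :: int where m: "s / \<delta> + 1/2 = of_int m" by (auto elim: Ints_cases)
    have "-r/\<delta> \<le> s/\<delta>" "s/\<delta> \<le> r/\<delta>"
      using divide_right_mono[of "-r" s \<delta>] divide_right_mono[of s r \<delta>] s d by auto
    then have "of_int \<lfloor>-r/\<delta>\<rfloor> \<le> (of_int m :: real)" "of_int m \<le> of_int \<lceil>r/\<delta>\<rceil> + (1::real)"
      using m of_int_floor_le[of "-r/\<delta>"] le_of_int_ceiling[of "r/\<delta>"] by linarith+
    then have "\<lfloor>-r/\<delta>\<rfloor> \<le> m" "m \<le> \<lceil>r/\<delta>\<rceil> + 1" by linarith+
    moreover have "s = (of_int m - 1/2) * \<delta>" using m d by (simp add: field_simps)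
    ultimately show "s \<in> (\<lambda>m. (of_int m - 1/2) * \<delta>) ` {\<lfloor>-r/\<delta>\<rfloor>..\<lceil>r/\<delta>\<rceil>+1}" by auto
  qed
qed simp

lemma kernel_primitive:
  assumes d: "\<delta> > 0" and r: "r > 0"
  shows "primitive_on r (kernel \<delta> r (Suc k)) (kernel \<delta> r k)"
proof -
  have a: "-r-\<delta> \<le> -\<delta>/2" using d r by simp
  have "continuous_on {-r..r} (kernel \<delta> r (Suc k))"
    by (rule continuous_on_subset[OF kern_continuous[OF d a, of r]]) (use d in auto)
  moreover have "(kernel \<delta> r (Suc k) has_real_derivative kernel \<delta> r k s) (at s)"
    if "s \<in> {-r..r} - {s \<in> {-r..r}. s / \<delta> + 1/2 \<in> \<int>}" for s
    by (rule kern_deriv[OF d a]) (use that d in auto)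
  ultimately show ?thesis
    unfolding primitive_on_def using half_integer_points_finite[OF d] by blast
qed

lemma kernel_bound:
  assumes "\<delta> > 0" "r > 0" "s \<in> {-r..r}"
  shows "\<bar>kernel \<delta> r k s\<bar> \<le> 2^k * \<delta>^(k+1) / 2"
  using kern_zero_mean_periodic[of \<delta> "-r-\<delta>" k] assms unfolding zero_mean_periodic_def by auto

lemma kernel_weighted_integrable:
  assumes d: "\<delta> > 0" and r: "r > 0" and w: "continuous_on {0..pi} w"
  shows "(\<lambda>\<theta>. w \<theta> * kernel \<delta> r k (r * cos \<theta>)) integrable_on {0..pi}"
proof (cases k)
  case 0
  then show ?thesis using Dd_weighted_integrable[OF d w] by simp
next
  case (Suc j)
  show ?thesis unfolding Suc
    by (intro integrable_continuous_real continuous_intros w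
          primitive_on_continuous_comp[OF r kernel_primitive[OF d r]])
qed

section \<open>Decay of the moments of the kernel tower\<close>

definition order_scale :: "real \<Rightarrow> real \<Rightarrow> nat \<Rightarrow> nat \<Rightarrow> real" where
  "order_scale \<delta> r k n = \<delta>^(k+1) * sqrt (\<delta>/r) ^ (n+1)"

definition has_order :: "(real \<Rightarrow> real \<Rightarrow> real) \<Rightarrow> nat \<Rightarrow> nat \<Rightarrow> bool" where
  "has_order F k n \<longleftrightarrow> (\<exists>C\<ge>0. \<forall>\<delta> r. 0 < \<delta> \<longrightarrow> \<delta> \<le> r \<longrightarrow> \<bar>F \<delta> r\<bar> \<le> C * order_scale \<delta> r k n)"

lemma has_orderI:
  assumes "C \<ge> 0" "\<And>\<delta> r. 0 < \<delta> \<Longrightarrow> \<delta> \<le> r \<Longrightarrow> \<bar>F \<delta> r\<bar> \<le> C * order_scale \<delta> r k n"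
  shows "has_order F k n"
  using assms unfolding has_order_def by blast

lemma order_scale_step:
  assumes "0 < \<delta>" "0 < r"
  shows "order_scale \<delta> r (Suc k) n / r = order_scale \<delta> r k (Suc (Suc n))"
  using assms by (simp add: order_scale_def field_simps)

text \<open>For \<open>\<delta> \<le> r\<close> we have \<open>\<epsilon> \<le> 1\<close>, so higher powers of \<open>\<epsilon>\<close> are smaller.\<close>
lemma order_scale_mono:
  assumes "0 < \<delta>" "\<delta> \<le> r"
  shows "order_scale \<delta> r k (Suc (Suc n)) \<le> order_scale \<delta> r k n"
  unfolding order_scale_def using assms
  by (intro mult_left_mono power_decreasing) (auto simp: divide_le_eq_1)

text \<open>Zeroth moments: \<open>\<epsilon> = sqrt (\<delta>/r)\<close> balances the two terms of \<open>weighted_integral_bound\<close>.\<close>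
lemma kernel_weighted_bound:
  assumes d: "0 < \<delta>" "\<delta> \<le> r"
    and wd: "\<And>\<theta>. (w has_real_derivative w' \<theta>) (at \<theta>)" and w'c: "continuous_on UNIV w'"
    and wb: "\<And>\<theta>. \<bar>w \<theta>\<bar> \<le> 1" and w'b: "\<And>\<theta>. \<bar>w' \<theta>\<bar> \<le> 1"
  shows "\<bar>integral {0..pi} (\<lambda>\<theta>. w \<theta> * kernel \<delta> r k (r * cos \<theta>))\<bar> \<le> 13 * 2^k * order_scale \<delta> r k 0"
proof -
  have r: "r > 0" using d by simp
  define \<epsilon> where "\<epsilon> = sqrt (\<delta>/r)"
  have e: "0 < \<epsilon>" "\<epsilon> \<le> 1" using d unfolding \<epsilon>_def by (auto simp: divide_le_eq_1)
  have e2: "\<epsilon> * \<epsilon> = \<delta> / r" using d unfolding \<epsilon>_def by simp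
  have wc: "continuous_on {0..pi} w"
    by (rule DERIV_continuous_on) (use wd in \<open>auto intro: has_field_derivative_at_within\<close>)
  have "\<bar>integral {0..pi} (\<lambda>\<theta>. w \<theta> * kernel \<delta> r k (r * cos \<theta>))\<bar>
      \<le> 2 * \<epsilon> * (2^k * \<delta>^(k+1) / 2) + 12 * (2^Suc k * \<delta>^(Suc k + 1) / 2) / (r * \<epsilon>)"
    by (rule weighted_integral_bound[OF r e kernel_primitive[OF d(1) r] kernel_bound[OF d(1) r]
          kernel_bound[OF d(1) r] wd w'c wb w'b kernel_weighted_integrable[OF d(1) r wc]])
  also have "12 * (2^Suc k * \<delta>^(Suc k + 1) / 2) / (r * \<epsilon>) = 12 * 2^k * \<delta>^(k+1) * ((\<delta> / r) / \<epsilon>)"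
    by (simp add: field_simps)
  also have "(\<delta> / r) / \<epsilon> = \<epsilon>" unfolding e2[symmetric] using e by simp
  finally show ?thesis unfolding order_scale_def \<epsilon>_def by (simp add: algebra_simps)
qed

lemma kernel_moments_order_0:
  "has_order (\<lambda>\<delta> r. sin_moment r (kernel \<delta> r k) 0) k 0"
  "has_order (\<lambda>\<delta> r. cos_sin_moment r (kernel \<delta> r k) 0) k 0"
proof -
  have "\<bar>sin_moment r (kernel \<delta> r k) 0\<bar> \<le> 13 * 2^k * order_scale \<delta> r k 0"
    if "0 < \<delta>" "\<delta> \<le> r" for \<delta> r
    using kernel_weighted_bound[where w="\<lambda>_. 1" and w'="\<lambda>_. 0" and k=k, OF that]
    by (simp add: sin_moment_def)
  then show "has_order (\<lambda>\<delta> r. sin_moment r (kernel \<delta> r k) 0) k 0"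
    by (intro has_orderI[of "13 * 2^k"]) auto
  have "\<bar>cos_sin_moment r (kernel \<delta> r k) 0\<bar> \<le> 13 * 2^k * order_scale \<delta> r k 0"
    if "0 < \<delta>" "\<delta> \<le> r" for \<delta> r
    using kernel_weighted_bound[OF that DERIV_cos _ abs_cos_le_one]
    by (simp add: cos_sin_moment_def continuous_intros)
  then show "has_order (\<lambda>\<delta> r. cos_sin_moment r (kernel \<delta> r k) 0) k 0"
    by (intro has_orderI[of "13 * 2^k"]) auto
qed

text \<open>First moments: \<open>sup \<bar>K (k+1)\<bar> / r\<close> is of order \<open>\<delta>^(k+2) / r = \<delta>^(k+1) \<epsilon>^2\<close>.\<close>
lemma kernel_moments_order_1:
  "has_order (\<lambda>\<delta> r. sin_moment r (kernel \<delta> r k) 1) k 1"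
  "has_order (\<lambda>\<delta> r. cos_sin_moment r (kernel \<delta> r k) 1) k 1"
proof -
  have bounds: "\<bar>sin_moment r (kernel \<delta> r k) 1\<bar> \<le> 6 * 2^k * order_scale \<delta> r k 1 \<and>
      \<bar>cos_sin_moment r (kernel \<delta> r k) 1\<bar> \<le> 6 * 2^k * order_scale \<delta> r k 1"
    if d: "0 < \<delta>" "\<delta> \<le> r" for \<delta> r
  proof -
    have r: "r > 0" using d by simp
    have "sqrt (\<delta> / r) ^ (1 + 1) = \<delta> / r" using d by simp
    then have "6 * (2^Suc k * \<delta>^(Suc k + 1) / 2) / r = 6 * 2^k * order_scale \<delta> r k 1"
      unfolding order_scale_def by (simp add: field_simps)
    then show ?thesis
      using first_moments_bound[OF r kernel_primitive[OF d(1) r, of k] kernel_bound[OF d(1) r, where k="Suc k"]]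
      by simp
  qed
  show "has_order (\<lambda>\<delta> r. sin_moment r (kernel \<delta> r k) 1) k 1"
    using bounds by (intro has_orderI[of "6 * 2^k"]) auto
  show "has_order (\<lambda>\<delta> r. cos_sin_moment r (kernel \<delta> r k) 1) k 1"
    using bounds by (intro has_orderI[of "6 * 2^k"]) auto
qed

lemma sin_moment_order_step:
  assumes "has_order (\<lambda>\<delta> r. cos_sin_moment r (kernel \<delta> r (Suc k)) m) (Suc k) m"
  shows "has_order (\<lambda>\<delta> r. sin_moment r (kernel \<delta> r k) (Suc (Suc m))) k (Suc (Suc m))"
proof -
  obtain C where C: "C \<ge> 0"
    "\<And>\<delta> r. 0 < \<delta> \<Longrightarrow> \<delta> \<le> r \<Longrightarrow> \<bar>cos_sin_moment r (kernel \<delta> r (Suc k)) m\<bar> \<le> C * order_scale \<delta> r (Suc k) m"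
    using assms unfolding has_order_def by blast
  show ?thesis
  proof (rule has_orderI[of "real (Suc m) * C"])
    show "0 \<le> real (Suc m) * C" using C(1) by simp
    fix \<delta> r :: real assume d: "0 < \<delta>" "\<delta> \<le> r"
    then have r: "0 < r" by simp
    have "\<bar>sin_moment r (kernel \<delta> r k) (Suc (Suc m))\<bar>
        = real (Suc m) * (\<bar>cos_sin_moment r (kernel \<delta> r (Suc k)) m\<bar> / r)"
      using sin_moment_recurrence[OF r kernel_primitive[OF d(1) r, of k]] r
      by (simp add: abs_mult abs_divide del: kern.simps)
    also have "\<dots> \<le> real (Suc m) * (C * order_scale \<delta> r (Suc k) m / r)"
      using C(2)[OF d] r by (intro mult_left_mono divide_right_mono) auto
    also have "\<dots> = real (Suc m) * C * order_scale \<delta> r k (Suc (Suc m))"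
      using order_scale_step[OF d(1) r, of k m] r by (simp add: field_simps)
    finally show "\<bar>sin_moment r (kernel \<delta> r k) (Suc (Suc m))\<bar>
        \<le> real (Suc m) * C * order_scale \<delta> r k (Suc (Suc m))" .
  qed
qed

lemma cos_sin_moment_order_step:
  assumes N1: "has_order (\<lambda>\<delta> r. sin_moment r (kernel \<delta> r (Suc k)) m) (Suc k) m"
    and N2: "has_order (\<lambda>\<delta> r. sin_moment r (kernel \<delta> r (Suc k)) (Suc (Suc m))) (Suc k) (Suc (Suc m))"
  shows "has_order (\<lambda>\<delta> r. cos_sin_moment r (kernel \<delta> r k) (Suc (Suc m))) k (Suc (Suc m))"
proof -
  obtain C1 where C1: "C1 \<ge> 0"
    "\<And>\<delta> r. 0 < \<delta> \<Longrightarrow> \<delta> \<le> r \<Longrightarrow> \<bar>sin_moment r (kernel \<delta> r (Suc k)) m\<bar> \<le> C1 * order_scale \<delta> r (Suc k) m"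
    using N1 unfolding has_order_def by blast
  obtain C2 where C2: "C2 \<ge> 0"
    "\<And>\<delta> r. 0 < \<delta> \<Longrightarrow> \<delta> \<le> r \<Longrightarrow> \<bar>sin_moment r (kernel \<delta> r (Suc k)) (Suc (Suc m))\<bar>
        \<le> C2 * order_scale \<delta> r (Suc k) (Suc (Suc m))"
    using N2 unfolding has_order_def by blast
  show ?thesis
  proof (rule has_orderI[of "real (Suc m) * C1 + real (Suc (Suc m)) * C2"])
    show "0 \<le> real (Suc m) * C1 + real (Suc (Suc m)) * C2" using C1(1) C2(1) by simp
    fix \<delta> r :: real assume d: "0 < \<delta>" "\<delta> \<le> r"
    then have r: "0 < r" by simp
    define a b where "a = real (Suc m)" and "b = real (Suc (Suc m))"
    define x y where "x = sin_moment r (kernel \<delta> r (Suc k)) m"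
      and "y = sin_moment r (kernel \<delta> r (Suc k)) (Suc (Suc m))"
    have "\<bar>cos_sin_moment r (kernel \<delta> r k) (Suc (Suc m))\<bar> = \<bar>a * x - b * y\<bar> / r"
      using cos_sin_moment_recurrence[OF r kernel_primitive[OF d(1) r, of k]] r
      unfolding a_def b_def x_def y_def by (simp add: abs_divide del: kern.simps)
    also have "\<dots> \<le> (a * \<bar>x\<bar> + b * \<bar>y\<bar>) / r"
      unfolding a_def b_def using r
      by (intro divide_right_mono) (auto simp: abs_mult intro: order_trans[OF abs_triangle_ineq4])
    also have "\<dots> \<le> (a * (C1 * order_scale \<delta> r (Suc k) m)
        + b * (C2 * order_scale \<delta> r (Suc k) (Suc (Suc m)))) / r"
      unfolding a_def b_def x_def y_def using r C1(2)[OF d] C2(2)[OF d]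
      by (intro divide_right_mono add_mono mult_left_mono) auto
    also have "\<dots> = a * C1 * order_scale \<delta> r k (Suc (Suc m))
        + b * C2 * order_scale \<delta> r k (Suc (Suc (Suc (Suc m))))"
      using order_scale_step[OF d(1) r, of k m] order_scale_step[OF d(1) r, of k "Suc (Suc m)"] r
      by (simp add: field_simps)
    also have "\<dots> \<le> a * C1 * order_scale \<delta> r k (Suc (Suc m)) + b * C2 * order_scale \<delta> r k (Suc (Suc m))"
      unfolding b_def using C2(1) by (intro add_left_mono mult_left_mono order_scale_mono d) auto
    finally show "\<bar>cos_sin_moment r (kernel \<delta> r k) (Suc (Suc m))\<bar>
        \<le> (real (Suc m) * C1 + real (Suc (Suc m)) * C2) * order_scale \<delta> r k (Suc (Suc m))"
      unfolding a_def b_def by (simp add: algebra_simps)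
  qed
qed

lemma kernel_moments_order:
  "has_order (\<lambda>\<delta> r. sin_moment r (kernel \<delta> r k) n) k n \<and>
   has_order (\<lambda>\<delta> r. cos_sin_moment r (kernel \<delta> r k) n) k n"
proof (induction n arbitrary: k rule: less_induct)
  case (less n)
  consider "n = 0" | "n = 1" | m where "n = Suc (Suc m)"
    by (metis One_nat_def not0_implies_Suc)
  then show ?case
  proof cases
    case 1
    then show ?thesis using kernel_moments_order_0 by simp
  next
    case 2
    then show ?thesis using kernel_moments_order_1 by simp
  next
    case 3
    have IH: "has_order (\<lambda>\<delta> r. sin_moment r (kernel \<delta> r j) m) j m"
      "has_order (\<lambda>\<delta> r. cos_sin_moment r (kernel \<delta> r j) m) j m" for j
      using less.IH[of m j] 3 by auto
    have N: "has_order (\<lambda>\<delta> r. sin_moment r (kernel \<delta> r j) n) j n" for j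
      unfolding 3 by (rule sin_moment_order_step[OF IH(2)])
    show ?thesis
      using N cos_sin_moment_order_step[OF IH(1) N[unfolded 3]] unfolding 3 by blast
  qed
qed

text \<open>The trivial bound \<open>\<bar>\<Delta>\<bar> \<le> \<delta>/2\<close>, which suffices when \<open>\<delta> > r\<close>.\<close>
lemma Dd_moment_trivial_bound:
  assumes d: "\<delta> > 0"
  shows "\<bar>cos_sin_moment r (Dd \<delta>) n\<bar> \<le> 2 * \<delta>"
proof -
  have "\<bar>cos_sin_moment r (Dd \<delta>) n\<bar> \<le> \<delta>/2 * (pi - 0)"
    unfolding cos_sin_moment_def
  proof (rule integral_abs_bound)
    show "(\<lambda>\<theta>. cos \<theta> * sin \<theta> ^ n * Dd \<delta> (r * cos \<theta>)) integrable_on {0..pi}"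
      by (rule Dd_weighted_integrable[OF d]) (intro continuous_intros)
    fix \<theta>
    have "\<bar>cos \<theta>\<bar> * \<bar>sin \<theta>\<bar> ^ n * \<bar>Dd \<delta> (r * cos \<theta>)\<bar> \<le> 1 * (\<delta>/2)"
      by (intro mult_mono mult_le_one power_le_one Dd_bound[OF d]) auto
    then show "\<bar>cos \<theta> * sin \<theta> ^ n * Dd \<delta> (r * cos \<theta>)\<bar> \<le> \<delta>/2"
      by (simp add: abs_mult power_abs)
  qed simp
  also have "\<dots> \<le> 2 * \<delta>" using pi_less_4 d by simp
  finally show ?thesis .
qed

lemma Dd_moment_bound:
  "\<exists>C. \<forall>r \<delta>. 0 < r \<longrightarrow> 0 < \<delta> \<longrightarrow> \<bar>cos_sin_moment r (Dd \<delta>) n\<bar> \<le> C * order_scale \<delta> r 0 n"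
proof -
  obtain C where C: "C \<ge> 0"
    "\<And>\<delta> r. 0 < \<delta> \<Longrightarrow> \<delta> \<le> r \<Longrightarrow> \<bar>cos_sin_moment r (Dd \<delta>) n\<bar> \<le> C * order_scale \<delta> r 0 n"
    using kernel_moments_order[of 0 n] unfolding has_order_def by auto
  have "\<bar>cos_sin_moment r (Dd \<delta>) n\<bar> \<le> max C 2 * order_scale \<delta> r 0 n" if r: "0 < r" and d: "0 < \<delta>" for r \<delta>
  proof (cases "\<delta> \<le> r")
    case True
    have "0 \<le> order_scale \<delta> r 0 n" using d r by (simp add: order_scale_def)
    then show ?thesis using C(2)[OF d True] by (smt (verit) mult_right_mono)
  next
    case False
    then have "1 \<le> sqrt (\<delta> / r) ^ (n+1)" using r by (intro one_le_power) auto
    then have "2 * \<delta> \<le> 2 * order_scale \<delta> r 0 n" using d by (simp add: order_scale_def)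
    also have "\<dots> \<le> max C 2 * order_scale \<delta> r 0 n" using d r by (simp add: order_scale_def mult_right_mono)
    finally show ?thesis using Dd_moment_trivial_bound[OF d, of r n] by linarith
  qed
  then show ?thesis by blast
qed

lemma order_scale_powr:
  assumes "0 < \<delta>" "0 < r"
  shows "order_scale \<delta> r 0 n = \<delta> powr ((real n + 3) / 2) / r powr ((real n + 1) / 2)"
proof -
  have "sqrt (\<delta> / r) ^ (n+1) = ((\<delta> / r) powr (1/2)) ^ (n+1)"
    using assms by (simp add: powr_half_sqrt)
  also have "\<dots> = (\<delta> / r) powr (real (n+1) * (1/2))"
    by (rule powr_power) (use assms in simp)
  also have "\<dots> = (\<delta> / r) powr ((real n + 1) / 2)" by (simp add: add.commute)
  also have "\<dots> = \<delta> powr ((real n + 1) / 2) / r powr ((real n + 1) / 2)"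
    using assms by (simp add: powr_divide)
  finally have "order_scale \<delta> r 0 n = \<delta> powr 1 * \<delta> powr ((real n + 1) / 2) / r powr ((real n + 1) / 2)"
    using assms by (simp add: order_scale_def)
  also have "\<delta> powr 1 * \<delta> powr ((real n + 1) / 2) = \<delta> powr ((real n + 3) / 2)"
    unfolding powr_add[symmetric] by (simp add: field_simps)
  finally show ?thesis .
qed

theorem lemma6p1:
  fixes d :: nat
  assumes "d \<ge> 2"
  shows "\<exists>C. \<forall>r \<delta>. r > 0 \<longrightarrow> \<delta> > 0 \<longrightarrow>
     \<bar>integral {0..pi} (\<lambda>\<theta>. Dd \<delta> (r * cos \<theta>) * cos \<theta> * (sin \<theta>) ^ (d - 2))\<bar>
       \<le> C * \<delta> powr ((real d + 1) / 2) / r powr ((real d - 1) / 2)"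
proof -
  define n where "n = d - 2"
  have exps: "(real d + 1) / 2 = (real n + 3) / 2" "(real d - 1) / 2 = (real n + 1) / 2"
    using assms unfolding n_def by (simp_all add: of_nat_diff)
  have integral: "integral {0..pi} (\<lambda>\<theta>. Dd \<delta> (r * cos \<theta>) * cos \<theta> * (sin \<theta>) ^ (d - 2))
      = cos_sin_moment r (Dd \<delta>) n" for r \<delta>
    unfolding cos_sin_moment_def n_def by (simp add: mult_ac)
  obtain C where "\<forall>r \<delta>. 0 < r \<longrightarrow> 0 < \<delta> \<longrightarrow> \<bar>cos_sin_moment r (Dd \<delta>) n\<bar> \<le> C * order_scale \<delta> r 0 n"
    using Dd_moment_bound by blast
  then show ?thesis
    unfolding integral exps using order_scale_powr by (intro exI[of _ C]) (simp add: mult.assoc)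
qed
end
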